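(* There is a constant $c>0$ such that for every $n\ge1$: (i) there is a formula $\phi\in\mathrm{LTL}[\mathsf F]$ with $\mathrm{size}(\phi)\le c\,n$ and $\mathcal L^\omega(\phi)=\mathcal L(\Phi_n)^-\cdot\Sigma^\omega$; and (ii) for every formula $\psi\in\mathsf F(\mathrm{LTL}[\mathsf Y,\mathsf{wY},\mathsf O,\mathsf H])$, if $\mathcal L^\omega(\psi)=\mathcal L(\Phi_n)^-\cdot\Sigma^\omega$ then $\mathrm{size}(\psi)\ge2^n$.
   Context: Fix $n\ge1$ and atomic propositions $AP=\{\tilde p,\tilde q\}\cup\{p_1,\dots,p_n\}\cup\{q_1,\dots,q_n\}$ (distinct), $\Sigma=2^{AP}$. Formulae (negation normal form) are built from literals $p,\neg p$ with $\land,\lor$ and operators $\mathsf X,\mathsf{wX},\mathsf F,\mathsf G,\mathsf Y,\mathsf{wY},\mathsf O,\mathsf H$. Finite-trace semantics on $\sigma\in\Sigma^+$, positions $0\le i<|\sigma|$: $\mathsf X\phi$: $i+1<|\sigma|$ and $\phi$ at $i+1$; $\mathsf{wX}\phi$: $i+1=|\sigma|$ or $\phi$ at $i+1$; $\mathsf F\phi$/$\mathsf G\phi$: $\phi$ at some/every $j$ with $i\le j<|\sigma|$; $\mathsf Y\phi$: $i>0$ and $\phi$ at $i-1$; $\mathsf{wY}\phi$: $i=0$ or $\phi$ at $i-1$; $\mathsf O\phi$/$\mathsf H\phi$: $\phi$ at some/every $0\le j\le i$; $\mathcal L(\phi)=\{\sigma\in\Sigma^+:\sigma,0\models\phi\}$.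 Infinite-trace semantics on $\sigma\in\Sigma^\omega$, positions $i\in\mathbb N$: same clauses except $\mathsf X\phi$ and $\mathsf{wX}\phi$ both mean $\phi$ at $i+1$, and $\mathsf F\phi$/$\mathsf G\phi$ mean $\phi$ at some/every $j\ge i$; $\mathcal L^\omega(\phi)=\{\sigma\in\Sigma^\omega:\sigma,0\models\phi\}$. Size: literals 1, unary operators add 1, binary connectives sum plus 1. $\mathrm{LTL}[S]$: formulae whose temporal operators are in $S$; $\mathsf F(\mathrm{LTL}[S])$: formulae $\mathsf F(\alpha)$ with $\alpha\in\mathrm{LTL}[S]$. The reverse $\sigma^-$ of $\sigma\in\Sigma^+$ satisfies $|\sigma^-|=|\sigma|$ and $\sigma^-[i]=\sigma[|\sigma|-1-i]$; $\mathcal L^-=\{\sigma^-:\sigma\in\mathcal L\}$; $\mathcal L\cdot\Sigma^\omega=\{\sigma\sigma':\sigma\in\mathcal L,\sigma'\in\Sigma^\omega\}$. $\Phi_n := \mathsf{F}\big(\tilde q\land\bigwedge_{i=1}^n\big((q_i\land\mathsf{O}(\tilde p\land p_i))\lor(\neg q_i\land\mathsf{O}(\tilde p\land\neg p_i))\big)\big)$. *)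

theory Defs
  imports Complex_Main
begin

text \<open>Atomic propositions: PT = p-tilde, QT = q-tilde, P i = p_i, Q i = q_i.
  The set AP depends on n; letters of Sigma are subsets of APs n.\<close>
datatype ap = PT | QT | P nat | Q nat

definition APs :: "nat \<Rightarrow> ap set" where
  "APs n = {PT, QT} \<union> P ` {1..n} \<union> Q ` {1..n}"

datatype ltl =
    Pos ap | Neg ap
  | And ltl ltl | Or ltl ltl
  | Nxt ltl | WNxt ltl | Fin ltl | Glob ltl
  | Yest ltl | WYest ltl | Once ltl | Hist ltl

datatype top = TX | TWX | TF | TG | TY | TWY | TO | TH

fun temps :: "ltl \<Rightarrow> top set" where
  "temps (Pos a) = {}"
| "temps (Neg a) = {}"
| "temps (And a b) = temps a \<union> temps b"
| "temps (Or a b) = temps a \<union> temps b"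
| "temps (Nxt a) = insert TX (temps a)"
| "temps (WNxt a) = insert TWX (temps a)"
| "temps (Fin a) = insert TF (temps a)"
| "temps (Glob a) = insert TG (temps a)"
| "temps (Yest a) = insert TY (temps a)"
| "temps (WYest a) = insert TWY (temps a)"
| "temps (Once a) = insert TO (temps a)"
| "temps (Hist a) = insert TH (temps a)"

fun atoms :: "ltl \<Rightarrow> ap set" where
  "atoms (Pos a) = {a}"
| "atoms (Neg a) = {a}"
| "atoms (And a b) = atoms a \<union> atoms b"
| "atoms (Or a b) = atoms a \<union> atoms b"
| "atoms (Nxt a) = atoms a"
| "atoms (WNxt a) = atoms a"
| "atoms (Fin a) = atoms a"
| "atoms (Glob a) = atoms a"
| "atoms (Yest a) = atoms a"
| "atoms (WYest a) = atoms a"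
| "atoms (Once a) = atoms a"
| "atoms (Hist a) = atoms a"

fun fsize :: "ltl \<Rightarrow> nat" where
  "fsize (Pos a) = 1"
| "fsize (Neg a) = 1"
| "fsize (And a b) = fsize a + fsize b + 1"
| "fsize (Or a b) = fsize a + fsize b + 1"
| "fsize (Nxt a) = fsize a + 1"
| "fsize (WNxt a) = fsize a + 1"
| "fsize (Fin a) = fsize a + 1"
| "fsize (Glob a) = fsize a + 1"
| "fsize (Yest a) = fsize a + 1"
| "fsize (WYest a) = fsize a + 1"
| "fsize (Once a) = fsize a + 1"
| "fsize (Hist a) = fsize a + 1"

fun semf :: "ap set list \<Rightarrow> nat \<Rightarrow> ltl \<Rightarrow> bool" where
  "semf s i (Pos a) = (a \<in> s ! i)"
| "semf s i (Neg a) = (a \<notin> s ! i)"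
| "semf s i (And a b) = (semf s i a \<and> semf s i b)"
| "semf s i (Or a b) = (semf s i a \<or> semf s i b)"
| "semf s i (Nxt a) = (i + 1 < length s \<and> semf s (i + 1) a)"
| "semf s i (WNxt a) = (i + 1 = length s \<or> semf s (i + 1) a)"
| "semf s i (Fin a) = (\<exists>j. i \<le> j \<and> j < length s \<and> semf s j a)"
| "semf s i (Glob a) = (\<forall>j. i \<le> j \<and> j < length s \<longrightarrow> semf s j a)"
| "semf s i (Yest a) = (i > 0 \<and> semf s (i - 1) a)"
| "semf s i (WYest a) = (i = 0 \<or> semf s (i - 1) a)"
| "semf s i (Once a) = (\<exists>j\<le>i. semf s j a)"
| "semf s i (Hist a) = (\<forall>j\<le>i. semf s j a)"

fun semw :: "(nat \<Rightarrow> ap set) \<Rightarrow> nat \<Rightarrow> ltl \<Rightarrow> bool" where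
  "semw w i (Pos a) = (a \<in> w i)"
| "semw w i (Neg a) = (a \<notin> w i)"
| "semw w i (And a b) = (semw w i a \<and> semw w i b)"
| "semw w i (Or a b) = (semw w i a \<or> semw w i b)"
| "semw w i (Nxt a) = semw w (i + 1) a"
| "semw w i (WNxt a) = semw w (i + 1) a"
| "semw w i (Fin a) = (\<exists>j\<ge>i. semw w j a)"
| "semw w i (Glob a) = (\<forall>j\<ge>i. semw w j a)"
| "semw w i (Yest a) = (i > 0 \<and> semw w (i - 1) a)"
| "semw w i (WYest a) = (i = 0 \<or> semw w (i - 1) a)"
| "semw w i (Once a) = (\<exists>j\<le>i. semw w j a)"
| "semw w i (Hist a) = (\<forall>j\<le>i. semw w j a)"

definition Lf :: "nat \<Rightarrow> ltl \<Rightarrow> ap set list set" where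
  "Lf n \<phi> = {s. s \<noteq> [] \<and> set s \<subseteq> Pow (APs n) \<and> semf s 0 \<phi>}"

definition Lw :: "nat \<Rightarrow> ltl \<Rightarrow> (nat \<Rightarrow> ap set) set" where
  "Lw n \<phi> = {w. (\<forall>i. w i \<subseteq> APs n) \<and> semw w 0 \<phi>}"

definition conc_omega :: "nat \<Rightarrow> ap set list set \<Rightarrow> (nat \<Rightarrow> ap set) set" where
  "conc_omega n L = {w. \<exists>s\<in>L. \<exists>w'. (\<forall>i. w' i \<subseteq> APs n) \<and>
       w = (\<lambda>i. if i < length s then s ! i else w' (i - length s))}"

fun bigAnd :: "ltl list \<Rightarrow> ltl" where
  "bigAnd [a] = a"
| "bigAnd (a # as) = And a (bigAnd as)"
| "bigAnd [] = Pos QT" (* never used: n \<ge> 1 *)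

definition clause :: "nat \<Rightarrow> ltl" where
  "clause i = Or (And (Pos (Q i)) (Once (And (Pos PT) (Pos (P i)))))
                 (And (Neg (Q i)) (Once (And (Pos PT) (Neg (P i)))))"

definition Phi :: "nat \<Rightarrow> ltl" where
  "Phi n = Fin (And (Pos QT) (bigAnd (map clause [1..<n+1])))"

end

theory Submission
  imports Defs
begin

(* Reversing a finite word turns the past operator O of Phi_n into the future operator F: a word is
   in L(Phi_n)^- . Sigma^omega iff at some q~-position every clause i is witnessed by a later
   p~-position agreeing with it on p_i/q_i. This is Phi_n with O replaced by F, of size 14n + 2.

   For the lower bound let F alpha define this language, alpha pure-past. The truth values of the
   subformulas of alpha at position j + 1 depend only on those at j and on the letter at j + 1.
   Encode a family B of subsets of {1..n} by the word of q~-letters of its members, and probe it by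
   appending the p~-letter of a set b: the probed word is in the language iff b is in B, and alpha
   cannot hold before the probe letter since the unprobed word is not in the language. Hence the set
   of subformulas of alpha true at the end of the encoding determines B, which gives
   2^(2^n) <= 2^|subformulas alpha| <= 2^size(alpha). *)

lemma semf_bigAnd: "xs \<noteq> [] \<Longrightarrow> semf s j (bigAnd xs) \<longleftrightarrow> (\<forall>\<phi>\<in>set xs. semf s j \<phi>)"
  by (induction xs rule: bigAnd.induct) auto

lemma semw_bigAnd: "xs \<noteq> [] \<Longrightarrow> semw w j (bigAnd xs) \<longleftrightarrow> (\<forall>\<phi>\<in>set xs. semw w j \<phi>)"
  by (induction xs rule: bigAnd.induct) auto

lemma temps_bigAnd: "xs \<noteq> [] \<Longrightarrow> temps (bigAnd xs) = \<Union>(temps ` set xs)"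
  by (induction xs rule: bigAnd.induct) auto

lemma atoms_bigAnd: "xs \<noteq> [] \<Longrightarrow> atoms (bigAnd xs) = \<Union>(atoms ` set xs)"
  by (induction xs rule: bigAnd.induct) auto

lemma fsize_bigAnd: "xs \<noteq> [] \<Longrightarrow> fsize (bigAnd xs) + 1 = (\<Sum>\<phi>\<leftarrow>xs. fsize \<phi> + 1)"
  by (induction xs rule: bigAnd.induct) auto

lemma ex_less_diff_Suc_iff: "(\<exists>j<m. A (m - Suc j)) \<longleftrightarrow> (\<exists>j<m. A j)"
proof
  assume "\<exists>j<m. A (m - Suc j)"
  then show "\<exists>j<m. A j" by (metis diff_Suc_less less_nat_zero_code neq0_conv)
next
  assume "\<exists>j<m. A j"
  then obtain j where "j < m" "A j" by blast
  then have "m - Suc j < m" "A (m - Suc (m - Suc j))" by (simp_all add: Suc_diff_Suc)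
  then show "\<exists>j<m. A (m - Suc j)" by blast
qed

lemma conc_omega_eq_prefixes:
  assumes "\<forall>s\<in>L. set s \<subseteq> Pow (APs n)"
  shows "conc_omega n L = {w. (\<forall>i. w i \<subseteq> APs n) \<and> (\<exists>N. map w [0..<N] \<in> L)}"
proof (intro set_eqI iffI)
  fix w assume "w \<in> conc_omega n L"
  then obtain s w' where s: "s \<in> L" and w': "\<forall>i. w' i \<subseteq> APs n"
    and w: "w = (\<lambda>i. if i < length s then s ! i else w' (i - length s))"
    unfolding conc_omega_def by blast
  have "map w [0..<length s] = s"
    unfolding w by (rule nth_equalityI) simp_all
  moreover have "w i \<subseteq> APs n" for i
  proof (cases "i < length s")
    case True
    then have "s ! i \<subseteq> APs n" using assms s nth_mem[OF True] by blast
    then show ?thesis unfolding w using True by simp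
  qed (use w' in \<open>simp add: w\<close>)
  ultimately show "w \<in> {w. (\<forall>i. w i \<subseteq> APs n) \<and> (\<exists>N. map w [0..<N] \<in> L)}"
    using s by (auto intro!: exI[of _ "length s"])
next
  fix w assume "w \<in> {w. (\<forall>i. w i \<subseteq> APs n) \<and> (\<exists>N. map w [0..<N] \<in> L)}"
  then obtain N where N: "\<forall>i. w i \<subseteq> APs n" "map w [0..<N] \<in> L" by blast
  have "w = (\<lambda>i. if i < length (map w [0..<N]) then map w [0..<N] ! i
      else (\<lambda>m. w (m + N)) (i - length (map w [0..<N])))"
    by (simp add: fun_eq_iff)
  then show "w \<in> conc_omega n L"
    unfolding conc_omega_def
    by (intro CollectI bexI[OF _ N(2)] exI[of _ "\<lambda>m. w (m + N)"] conjI) (use N(1) in auto)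
qed

definition matched :: "nat \<Rightarrow> ap set \<Rightarrow> ap set set \<Rightarrow> bool" where
  "matched n u V \<longleftrightarrow> QT \<in> u \<and> (\<forall>i\<in>{1..n}. \<exists>v\<in>V. PT \<in> v \<and> (P i \<in> v \<longleftrightarrow> Q i \<in> u))"

definition future_match_lang :: "nat \<Rightarrow> (nat \<Rightarrow> ap set) set" where
  "future_match_lang n = {w. (\<forall>i. w i \<subseteq> APs n) \<and> (\<exists>j. matched n (w j) (w ` {j..}))}"

lemma matched_mono: "matched n u V \<Longrightarrow> V \<subseteq> V' \<Longrightarrow> matched n u V'"
  unfolding matched_def by blast

lemma matched_bounded:
  fixes w :: "nat \<Rightarrow> ap set"
  assumes "matched n u (w ` {j..})"
  obtains N where "j < N" "matched n u (w ` {j..<N})"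
proof -
  have "\<forall>i\<in>{1..n}. \<exists>k\<ge>j. PT \<in> w k \<and> (P i \<in> w k \<longleftrightarrow> Q i \<in> u)"
    using assms unfolding matched_def by auto
  then obtain K where K: "\<forall>i\<in>{1..n}. K i \<ge> j \<and> PT \<in> w (K i) \<and> (P i \<in> w (K i) \<longleftrightarrow> Q i \<in> u)"
    by metis
  define N where "N = Suc (Max (insert j (K ` {1..n})))"
  have "j < N" and KN: "\<forall>i\<in>{1..n}. K i < N"
    unfolding N_def by (auto simp: le_max_iff_disj intro!: le_imp_less_Suc disjI2 Max_ge)
  have "matched n u (w ` {j..<N})"
    using assms K KN unfolding matched_def by fastforce
  with \<open>j < N\<close> show ?thesis by (rule that)
qed

lemma semf_clause: "semf s j (clause i) \<longleftrightarrow> (\<exists>k\<le>j. PT \<in> s ! k \<and> (P i \<in> s ! k \<longleftrightarrow> Q i \<in> s ! j))"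
  unfolding clause_def by auto

lemma semf_Phi:
  assumes "n \<ge> 1"
  shows "semf s 0 (Phi n) \<longleftrightarrow> (\<exists>j<length s. matched n (s ! j) ((!) s ` {..j}))"
  using assms unfolding Phi_def
  by (simp add: semf_bigAnd semf_clause matched_def atLeastLessThanSuc_atLeastAtMost Bex_def
      del: upt_Suc)

lemma Lf_Phi:
  assumes "n \<ge> 1"
  shows "s \<in> Lf n (Phi n) \<longleftrightarrow>
    set s \<subseteq> Pow (APs n) \<and> (\<exists>j<length s. matched n (s ! j) (set (take (Suc j) s)))"
proof -
  have "(!) s ` {..j} = set (take (Suc j) s)" if "j < length s" for j
    using that nth_image[of "Suc j" s] by (simp add: atLeast0LessThan lessThan_Suc_atMost)
  then show ?thesis
    unfolding Lf_def semf_Phi[OF assms] by auto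
qed

lemma rev_Lf_Phi:
  assumes "n \<ge> 1"
  shows "t \<in> rev ` Lf n (Phi n) \<longleftrightarrow>
    set t \<subseteq> Pow (APs n) \<and> (\<exists>j<length t. matched n (t ! j) (set (drop j t)))"
proof -
  have "t \<in> rev ` Lf n (Phi n) \<longleftrightarrow> rev t \<in> Lf n (Phi n)"
    by (metis image_iff rev_rev_ident)
  also have "\<dots> \<longleftrightarrow> set t \<subseteq> Pow (APs n) \<and>
      (\<exists>j<length t. matched n (t ! (length t - Suc j)) (set (drop (length t - Suc j) t)))"
    unfolding Lf_Phi[OF assms] by (simp add: rev_nth take_rev cong: conj_cong)
  finally show ?thesis
    using ex_less_diff_Suc_iff[of "length t" "\<lambda>j. matched n (t ! j) (set (drop j t))"] by simp
qed

lemma prefix_in_rev_Lf_Phi: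
  assumes "n \<ge> 1"
  shows "map w [0..<N] \<in> rev ` Lf n (Phi n) \<longleftrightarrow>
    (\<forall>i<N. w i \<subseteq> APs n) \<and> (\<exists>j<N. matched n (w j) (w ` {j..<N}))"
  by (auto simp: rev_Lf_Phi[OF assms] drop_map image_subset_iff)

lemma conc_omega_rev_Lf_Phi:
  assumes "n \<ge> 1"
  shows "conc_omega n (rev ` Lf n (Phi n)) = future_match_lang n"
proof -
  have letters: "\<forall>t\<in>rev ` Lf n (Phi n). set t \<subseteq> Pow (APs n)"
    using rev_Lf_Phi[OF assms] by blast
  have bounded: "(\<exists>N. \<exists>j<N. matched n (w j) (w ` {j..<N})) \<longleftrightarrow> (\<exists>j. matched n (w j) (w ` {j..}))"
    for w :: "nat \<Rightarrow> ap set"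
  proof
    assume "\<exists>N. \<exists>j<N. matched n (w j) (w ` {j..<N})"
    then show "\<exists>j. matched n (w j) (w ` {j..})"
      by (meson atLeastLessThan_iff atLeast_iff image_mono matched_mono subsetI)
  next
    assume "\<exists>j. matched n (w j) (w ` {j..})"
    then show "\<exists>N. \<exists>j<N. matched n (w j) (w ` {j..<N})"
      by (meson matched_bounded)
  qed
  show ?thesis
    unfolding conc_omega_eq_prefixes[OF letters] future_match_lang_def prefix_in_rev_Lf_Phi[OF assms]
    using bounded by auto
qed

definition clauseF :: "nat \<Rightarrow> ltl" where
  "clauseF i = Or (And (Pos (Q i)) (Fin (And (Pos PT) (Pos (P i)))))
                 (And (Neg (Q i)) (Fin (And (Pos PT) (Neg (P i)))))"

definition PhiF :: "nat \<Rightarrow> ltl" where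
  "PhiF n = Fin (And (Pos QT) (bigAnd (map clauseF [1..<n+1])))"

lemma semw_clauseF: "semw w j (clauseF i) \<longleftrightarrow> (\<exists>k\<ge>j. PT \<in> w k \<and> (P i \<in> w k \<longleftrightarrow> Q i \<in> w j))"
  unfolding clauseF_def by auto

lemma semw_PhiF:
  assumes "n \<ge> 1"
  shows "semw w 0 (PhiF n) \<longleftrightarrow> (\<exists>j. matched n (w j) (w ` {j..}))"
  using assms unfolding PhiF_def
  by (simp add: semw_bigAnd semw_clauseF matched_def atLeastLessThanSuc_atLeastAtMost Bex_def
      del: upt_Suc)

lemma Lw_PhiF: "n \<ge> 1 \<Longrightarrow> Lw n (PhiF n) = future_match_lang n"
  unfolding Lw_def future_match_lang_def by (simp add: semw_PhiF)

lemma temps_PhiF: "n \<ge> 1 \<Longrightarrow> temps (PhiF n) = {TF}"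
  unfolding PhiF_def by (auto simp: temps_bigAnd clauseF_def simp del: upt_Suc)

lemma atoms_PhiF: "n \<ge> 1 \<Longrightarrow> atoms (PhiF n) \<subseteq> APs n"
  unfolding PhiF_def by (auto simp: atoms_bigAnd clauseF_def APs_def simp del: upt_Suc)

lemma fsize_PhiF:
  assumes "n \<ge> 1"
  shows "fsize (PhiF n) = 14 * n + 2"
proof -
  have "fsize (bigAnd (map clauseF [1..<n+1])) + 1 = (\<Sum>\<phi>\<leftarrow>map clauseF [1..<n+1]. fsize \<phi> + 1)"
    using assms by (intro fsize_bigAnd) simp
  also have "\<dots> = 14 * n"
    by (simp add: clauseF_def sum_list_triv comp_def del: upt_Suc)
  finally show ?thesis unfolding PhiF_def by (simp del: upt_Suc)
qed

abbreviation pure_past :: "ltl \<Rightarrow> bool" where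
  "pure_past \<phi> \<equiv> temps \<phi> \<subseteq> {TY, TWY, TO, TH}"

primrec subformulas :: "ltl \<Rightarrow> ltl set" where
  "subformulas (Pos a) = {Pos a}"
| "subformulas (Neg a) = {Neg a}"
| "subformulas (And \<phi> \<psi>) = insert (And \<phi> \<psi>) (subformulas \<phi> \<union> subformulas \<psi>)"
| "subformulas (Or \<phi> \<psi>) = insert (Or \<phi> \<psi>) (subformulas \<phi> \<union> subformulas \<psi>)"
| "subformulas (Nxt \<phi>) = insert (Nxt \<phi>) (subformulas \<phi>)"
| "subformulas (WNxt \<phi>) = insert (WNxt \<phi>) (subformulas \<phi>)"
| "subformulas (Fin \<phi>) = insert (Fin \<phi>) (subformulas \<phi>)"
| "subformulas (Glob \<phi>) = insert (Glob \<phi>) (subformulas \<phi>)"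
| "subformulas (Yest \<phi>) = insert (Yest \<phi>) (subformulas \<phi>)"
| "subformulas (WYest \<phi>) = insert (WYest \<phi>) (subformulas \<phi>)"
| "subformulas (Once \<phi>) = insert (Once \<phi>) (subformulas \<phi>)"
| "subformulas (Hist \<phi>) = insert (Hist \<phi>) (subformulas \<phi>)"

lemma finite_subformulas: "finite (subformulas \<phi>)"
  by (induction \<phi>) auto

lemma card_insert_Un_le: "finite A \<Longrightarrow> finite B \<Longrightarrow> card (insert x (A \<union> B)) \<le> card A + card B + 1"
  using card_Un_le[of A B] by (simp add: card_insert_if)

lemma card_subformulas_le_fsize: "card (subformulas \<phi>) \<le> fsize \<phi>"
proof (induction \<phi>)
  case (And \<phi> \<psi>)
  then show ?case
    using card_insert_Un_le[OF finite_subformulas finite_subformulas, of "And \<phi> \<psi>" \<phi> \<psi>] by simp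
next
  case (Or \<phi> \<psi>)
  then show ?case
    using card_insert_Un_le[OF finite_subformulas finite_subformulas, of "Or \<phi> \<psi>" \<phi> \<psi>] by simp
qed (auto simp: card_insert_if finite_subformulas)

lemma subformulas_refl: "\<phi> \<in> subformulas \<phi>"
  by (cases \<phi>) auto

lemma subformulas_trans: "\<psi> \<in> subformulas \<phi> \<Longrightarrow> subformulas \<psi> \<subseteq> subformulas \<phi>"
  by (induction \<phi>) auto

lemma temps_subformulas_subset: "\<psi> \<in> subformulas \<phi> \<Longrightarrow> temps \<psi> \<subseteq> temps \<phi>"
  by (induction \<phi>) auto

lemma semw_pure_past_prefix:
  "pure_past \<phi> \<Longrightarrow> (\<forall>m\<le>i. w m = w' m) \<Longrightarrow> semw w i \<phi> \<longleftrightarrow> semw w' i \<phi>"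
proof (induction \<phi> arbitrary: i)
  case (Yest \<phi>) then show ?case by (cases i) auto
next
  case (WYest \<phi>) then show ?case by (cases i) auto
next
  case (Once \<phi>)
  then have "\<forall>j\<le>i. semw w j \<phi> \<longleftrightarrow> semw w' j \<phi>" by auto
  then show ?case by auto
next
  case (Hist \<phi>)
  then have "\<forall>j\<le>i. semw w j \<phi> \<longleftrightarrow> semw w' j \<phi>" by auto
  then show ?case by auto
qed auto

lemma semw_Once_Suc: "semw w (Suc j) (Once \<phi>) \<longleftrightarrow> semw w (Suc j) \<phi> \<or> semw w j (Once \<phi>)"
  by (auto simp: le_Suc_eq)

lemma semw_Hist_Suc: "semw w (Suc j) (Hist \<phi>) \<longleftrightarrow> semw w (Suc j) \<phi> \<and> semw w j (Hist \<phi>)"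
  by (auto simp: le_Suc_eq)

lemma semw_pure_past_Suc:
  "pure_past \<phi> \<Longrightarrow> (\<forall>\<psi>\<in>subformulas \<phi>. semw w j \<psi> \<longleftrightarrow> semw w' j' \<psi>) \<Longrightarrow>
    w (Suc j) = w' (Suc j') \<Longrightarrow> semw w (Suc j) \<phi> \<longleftrightarrow> semw w' (Suc j') \<phi>"
proof (induction \<phi>)
  case (Once \<phi>)
  then show ?case by (simp only: semw_Once_Suc) (auto simp: subformulas_refl)
next
  case (Hist \<phi>)
  then show ?case by (simp only: semw_Hist_Suc) (auto simp: subformulas_refl)
qed (auto simp: subformulas_refl)

definition sat_subformulas :: "ltl \<Rightarrow> (nat \<Rightarrow> ap set) \<Rightarrow> nat \<Rightarrow> ltl set" where
  "sat_subformulas \<phi> w i = {\<psi> \<in> subformulas \<phi>. semw w i \<psi>}"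

lemma sat_subformulas_eq_iff:
  "sat_subformulas \<phi> w i = sat_subformulas \<phi> w' i' \<longleftrightarrow>
    (\<forall>\<psi>\<in>subformulas \<phi>. semw w i \<psi> \<longleftrightarrow> semw w' i' \<psi>)"
  unfolding sat_subformulas_def by blast

lemma sat_subformulas_prefix:
  "pure_past \<phi> \<Longrightarrow> (\<forall>m\<le>i. w m = w' m) \<Longrightarrow> sat_subformulas \<phi> w i = sat_subformulas \<phi> w' i"
  unfolding sat_subformulas_eq_iff
  by (meson semw_pure_past_prefix temps_subformulas_subset order_trans)

lemma sat_subformulas_shift:
  assumes "pure_past \<phi>" "sat_subformulas \<phi> w j = sat_subformulas \<phi> w' j'"
    and "\<forall>k>0. w (j + k) = w' (j' + k)"
  shows "sat_subformulas \<phi> w (j + k) = sat_subformulas \<phi> w' (j' + k)"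
proof (induction k)
  case 0
  show ?case using assms(2) by simp
next
  case (Suc k)
  have "semw w (Suc (j + k)) \<psi> \<longleftrightarrow> semw w' (Suc (j' + k)) \<psi>" if "\<psi> \<in> subformulas \<phi>" for \<psi>
  proof (rule semw_pure_past_Suc)
    show "pure_past \<psi>" using temps_subformulas_subset[OF that] assms(1) by blast
    show "\<forall>\<chi>\<in>subformulas \<psi>. semw w (j + k) \<chi> \<longleftrightarrow> semw w' (j' + k) \<chi>"
      using Suc.IH subformulas_trans[OF that] unfolding sat_subformulas_eq_iff by blast
    show "w (Suc (j + k)) = w' (Suc (j' + k))"
      using assms(3)[rule_format, of "Suc k"] by simp
  qed
  then show ?case unfolding sat_subformulas_eq_iff by simp
qed

definition ql :: "nat set \<Rightarrow> ap set" where
  "ql c = insert QT (Q ` c)"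

definition pl :: "nat set \<Rightarrow> ap set" where
  "pl b = insert PT (P ` b)"

(* Position 0 is left empty, so that position length cs ends the encoding even for cs = []. *)
definition set_word :: "nat set list \<Rightarrow> nat \<Rightarrow> ap set" where
  "set_word cs m = (if 0 < m \<and> m \<le> length cs then ql (cs ! (m - 1)) else {})"

definition probe_word :: "nat set list \<Rightarrow> nat set \<Rightarrow> nat \<Rightarrow> ap set" where
  "probe_word cs b = (set_word cs)(Suc (length cs) := pl b)"

lemma probe_word_prefix: "m \<le> length cs \<Longrightarrow> probe_word cs b m = set_word cs m"
  by (simp add: probe_word_def)

lemma set_word_letters:
  assumes "set cs \<subseteq> Pow {1..n}"
  shows "set_word cs m \<subseteq> APs n"
proof (cases "0 < m \<and> m \<le> length cs")
  case True
  then have "cs ! (m - 1) \<in> set cs" by (intro nth_mem) auto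
  then have "cs ! (m - 1) \<subseteq> {1..n}" using assms by blast
  then show ?thesis
    using True unfolding set_word_def ql_def APs_def by auto
qed (auto simp: set_word_def)

lemma probe_word_letters:
  "set cs \<subseteq> Pow {1..n} \<Longrightarrow> b \<subseteq> {1..n} \<Longrightarrow> probe_word cs b m \<subseteq> APs n"
  using set_word_letters[of cs n m] unfolding probe_word_def pl_def APs_def by auto

lemma set_word_notin_future_match_lang: "n \<ge> 1 \<Longrightarrow> set_word cs \<notin> future_match_lang n"
  unfolding future_match_lang_def matched_def set_word_def ql_def by force

lemma QT_in_probe_word:
  "QT \<in> probe_word cs b j \<Longrightarrow> 0 < j \<and> j \<le> length cs \<and> probe_word cs b j = ql (cs ! (j - 1))"
  by (auto simp: probe_word_def set_word_def pl_def split: if_splits)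

lemma PT_in_probe_word: "PT \<in> probe_word cs b k \<Longrightarrow> probe_word cs b k = pl b"
  by (auto simp: probe_word_def set_word_def ql_def split: if_splits)

lemma probe_word_in_future_match_lang_iff:
  assumes n: "n \<ge> 1" and cs: "set cs \<subseteq> Pow {1..n}" and b: "b \<subseteq> {1..n}"
  shows "probe_word cs b \<in> future_match_lang n \<longleftrightarrow> b \<in> set cs"
proof
  assume "probe_word cs b \<in> future_match_lang n"
  then obtain j where m: "matched n (probe_word cs b j) (probe_word cs b ` {j..})"
    unfolding future_match_lang_def by blast
  then have "QT \<in> probe_word cs b j" unfolding matched_def by blast
  from QT_in_probe_word[OF this]
  have j: "j - 1 < length cs" and c: "probe_word cs b j = ql (cs ! (j - 1))" by auto
  have "i \<in> b \<longleftrightarrow> i \<in> cs ! (j - 1)" if "i \<in> {1..n}" for i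
  proof -
    have "\<exists>v\<in>probe_word cs b ` {j..}. PT \<in> v \<and> (P i \<in> v \<longleftrightarrow> Q i \<in> probe_word cs b j)"
      using m that unfolding matched_def by blast
    then obtain k where "PT \<in> probe_word cs b k" "P i \<in> probe_word cs b k \<longleftrightarrow> Q i \<in> probe_word cs b j"
      by blast
    then have "P i \<in> pl b \<longleftrightarrow> Q i \<in> ql (cs ! (j - 1))"
      using PT_in_probe_word c by metis
    then show ?thesis by (auto simp: pl_def ql_def)
  qed
  moreover have "cs ! (j - 1) \<in> set cs" using j by simp
  ultimately have "b = cs ! (j - 1)" using b cs by blast
  then show "b \<in> set cs" using j by simp
next
  assume "b \<in> set cs"
  then obtain p where p: "p < length cs" "cs ! p = b" by (auto simp: in_set_conv_nth)
  have "matched n (probe_word cs b (Suc p)) (probe_word cs b ` {Suc p..})"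
    unfolding matched_def
  proof (intro conjI ballI bexI)
    fix i
    show "PT \<in> probe_word cs b (Suc (length cs))"
      and "P i \<in> probe_word cs b (Suc (length cs)) \<longleftrightarrow> Q i \<in> probe_word cs b (Suc p)"
      using p by (auto simp: probe_word_def set_word_def ql_def pl_def)
    show "probe_word cs b (Suc (length cs)) \<in> probe_word cs b ` {Suc p..}"
      using p by simp
  qed (use p in \<open>simp add: probe_word_def set_word_def ql_def\<close>)
  then show "probe_word cs b \<in> future_match_lang n"
    unfolding future_match_lang_def using probe_word_letters[OF cs b] by blast
qed

lemma set_subset_if_same_sat_subformulas:
  assumes n: "n \<ge> 1" and past: "pure_past \<alpha>" and L: "Lw n (Fin \<alpha>) = future_match_lang n"
    and cs: "set cs \<subseteq> Pow {1..n}" and cs': "set cs' \<subseteq> Pow {1..n}"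
    and same: "sat_subformulas \<alpha> (set_word cs) (length cs) = sat_subformulas \<alpha> (set_word cs') (length cs')"
  shows "set cs \<subseteq> set cs'"
proof
  fix b assume "b \<in> set cs"
  then have b: "b \<subseteq> {1..n}" using cs by auto
  have in_L: "w \<in> future_match_lang n \<longleftrightarrow> (\<exists>j. semw w j \<alpha>)" if "\<forall>i. w i \<subseteq> APs n" for w
    using that unfolding L[symmetric] Lw_def by simp
  obtain j where j: "semw (probe_word cs b) j \<alpha>"
    using in_L probe_word_letters[OF cs b] probe_word_in_future_match_lang_iff[OF n cs b] \<open>b \<in> set cs\<close>
    by blast
  have "\<not> semw (set_word cs) m \<alpha>" for m
    using in_L set_word_letters[OF cs] set_word_notin_future_match_lang[OF n] by blast
  then have "\<not> j \<le> length cs"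
    using j semw_pure_past_prefix[OF past, of j "probe_word cs b" "set_word cs"] probe_word_prefix
    by auto
  then obtain k where k: "j = length cs + k" by (metis le_add_diff_inverse nat_le_linear)
  have "sat_subformulas \<alpha> (probe_word cs b) (length cs) = sat_subformulas \<alpha> (probe_word cs' b) (length cs')"
    using same sat_subformulas_prefix[OF past] probe_word_prefix by metis
  moreover have "\<forall>k>0. probe_word cs b (length cs + k) = probe_word cs' b (length cs' + k)"
    by (simp add: probe_word_def set_word_def)
  ultimately have "sat_subformulas \<alpha> (probe_word cs b) j = sat_subformulas \<alpha> (probe_word cs' b) (length cs' + k)"
    unfolding k by (rule sat_subformulas_shift[OF past])
  then have "semw (probe_word cs' b) (length cs' + k) \<alpha>"
    using j subformulas_refl unfolding sat_subformulas_def by blast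
  then have "probe_word cs' b \<in> future_match_lang n"
    using in_L probe_word_letters[OF cs' b] by blast
  then show "b \<in> set cs'"
    using probe_word_in_future_match_lang_iff[OF n cs' b] by blast
qed

lemma two_pow_le_card_subformulas:
  assumes "n \<ge> 1" "pure_past \<alpha>" "Lw n (Fin \<alpha>) = future_match_lang n"
  shows "2 ^ n \<le> card (subformulas \<alpha>)"
proof -
  define type where "type cs = sat_subformulas \<alpha> (set_word cs) (length cs)" for cs
  define family where
    "family T = {b. \<exists>cs. set cs \<subseteq> Pow {1..n} \<and> type cs = T \<and> b \<in> set cs}" for T
  have family_type: "family (type cs) = set cs" if "set cs \<subseteq> Pow {1..n}" for cs
    using set_subset_if_same_sat_subformulas[OF assms _ that] that
    unfolding family_def type_def by blast
  have "Pow (Pow {1..n}) \<subseteq> family ` Pow (subformulas \<alpha>)"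
  proof
    fix B assume B: "B \<in> Pow (Pow {1..n})"
    then have "finite B" by (simp add: finite_subset)
    then obtain cs where cs: "set cs = B" using finite_list by blast
    have "type cs \<in> Pow (subformulas \<alpha>)" unfolding type_def sat_subformulas_def by blast
    moreover have "B = family (type cs)" using family_type B cs by simp
    ultimately show "B \<in> family ` Pow (subformulas \<alpha>)" by blast
  qed
  then have "card (Pow (Pow {1..n})) \<le> card (family ` Pow (subformulas \<alpha>))"
    by (intro card_mono) (simp_all add: finite_subformulas)
  also have "\<dots> \<le> card (Pow (subformulas \<alpha>))"
    by (rule card_image_le) (simp add: finite_subformulas)
  finally have "2 ^ 2 ^ n \<le> (2::nat) ^ card (subformulas \<alpha>)"
    by (simp add: card_Pow finite_subformulas)
  then show ?thesis by simp
qed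

theorem lemma7:
  shows "\<exists>c::real. c > 0 \<and> (\<forall>n::nat. n \<ge> 1 \<longrightarrow>
    ((\<exists>\<phi>. temps \<phi> \<subseteq> {TF} \<and> atoms \<phi> \<subseteq> APs n \<and> real (fsize \<phi>) \<le> c * real n \<and>
         Lw n \<phi> = conc_omega n (rev ` Lf n (Phi n)))
     \<and> (\<forall>\<psi> \<alpha>. \<psi> = Fin \<alpha> \<and> temps \<alpha> \<subseteq> {TY, TWY, TO, TH} \<and> atoms \<psi> \<subseteq> APs n \<and>
         Lw n \<psi> = conc_omega n (rev ` Lf n (Phi n)) \<longrightarrow> fsize \<psi> \<ge> 2 ^ n)))"
proof (intro exI[of _ 16] conjI allI impI)
  fix n :: nat assume n: "n \<ge> 1"
  show "\<exists>\<phi>. temps \<phi> \<subseteq> {TF} \<and> atoms \<phi> \<subseteq> APs n \<and> real (fsize \<phi>) \<le> 16 * real n \<and>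
      Lw n \<phi> = conc_omega n (rev ` Lf n (Phi n))"
    using n temps_PhiF atoms_PhiF fsize_PhiF Lw_PhiF conc_omega_rev_Lf_Phi
    by (intro exI[of _ "PhiF n"]) auto
  fix \<psi> \<alpha>
  assume "\<psi> = Fin \<alpha> \<and> temps \<alpha> \<subseteq> {TY, TWY, TO, TH} \<and> atoms \<psi> \<subseteq> APs n \<and>
    Lw n \<psi> = conc_omega n (rev ` Lf n (Phi n))"
  then show "fsize \<psi> \<ge> 2 ^ n"
    using two_pow_le_card_subformulas[OF n, of \<alpha>] conc_omega_rev_Lf_Phi[OF n] card_subformulas_le_fsize[of \<alpha>]
    by auto
qed simp

end
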